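(* Let $\mathbb{R}^4$ have coordinates $(x_1,y_1,x_2,y_2)$ and consider symplectic forms $\omega_1 = f_1(x_1,y_1)\,dx_1\wedge dy_1 + f_2(x_2,y_2)\,dx_2\wedge dy_2$ and $\omega_2 = g_1(x_1,y_1)\,dx_1\wedge dy_1 + g_2(x_2,y_2)\,dx_2\wedge dy_2$, where $f_1,f_2,g_1,g_2$ are smooth and nowhere vanishing. Let $\varphi = (\varphi^1,\varphi^2,\varphi^3,\varphi^4)\in\operatorname{Symp}(\mathbb{R}^4,\omega_{\mathrm{std}})$ with $\varphi^*\omega_1 = \omega_2$. Then for each $x\in\mathbb{R}^4$, either $f_1(\varphi^1(x),\varphi^2(x)) = g_1(x_1,y_1)$ and $f_2(\varphi^3(x),\varphi^4(x)) = g_2(x_2,y_2)$, or $f_1(\varphi^1(x),\varphi^2(x)) = g_2(x_2,y_2)$ and $f_2(\varphi^3(x),\varphi^4(x)) = g_1(x_1,y_1)$.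
   Context: $\omega_{\mathrm{std}} = dx_1\wedge dy_1 + dx_2\wedge dy_2$. $\operatorname{Symp}(\mathbb{R}^4,\omega_{\mathrm{std}})$ is the set of diffeomorphisms $\varphi$ of $\mathbb{R}^4$ with $\varphi^*\omega_{\mathrm{std}} = \omega_{\mathrm{std}}$, where $(\varphi^*\omega)(x)(v,w) = \omega(\varphi(x))(d\varphi_x v, d\varphi_x w)$. *)

theory Defs
  imports "HOL-Analysis.Analysis"
begin

fun Ck :: "nat \<Rightarrow> ('a::euclidean_space \<Rightarrow> 'b::euclidean_space) \<Rightarrow> bool" where
  "Ck 0 f = continuous_on UNIV f"
| "Ck (Suc k) f = (\<exists>f'. (\<forall>x. (f has_derivative f' x) (at x)) \<and> (\<forall>v. Ck k (\<lambda>x. f' x v)))"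

definition smooth :: "('a::euclidean_space \<Rightarrow> 'b::euclidean_space) \<Rightarrow> bool" where
  "smooth f \<longleftrightarrow> (\<forall>k. Ck k f)"

definition smooth2 :: "(real \<Rightarrow> real \<Rightarrow> real) \<Rightarrow> bool" where
  "smooth2 f \<longleftrightarrow> smooth (\<lambda>p::real \<times> real. f (fst p) (snd p))"

text \<open>R^4 with coordinates (x1,y1,x2,y2) = (p$1,p$2,p$3,p$4). A 2-form is given pointwise
  as a function p v w. The form a(x1,y1) dx1/\dy1 + b(x2,y2) dx2/\dy2:\<close>
definition split_form :: "(real \<Rightarrow> real \<Rightarrow> real) \<Rightarrow> (real \<Rightarrow> real \<Rightarrow> real)
    \<Rightarrow> real^4 \<Rightarrow> real^4 \<Rightarrow> real^4 \<Rightarrow> real" where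
  "split_form a b p v w =
     a (p$1) (p$2) * (v$1 * w$2 - v$2 * w$1) + b (p$3) (p$4) * (v$3 * w$4 - v$4 * w$3)"

definition omega_std :: "real^4 \<Rightarrow> real^4 \<Rightarrow> real^4 \<Rightarrow> real" where
  "omega_std = split_form (\<lambda>_ _. 1) (\<lambda>_ _. 1)"

definition pullback :: "(real^4 \<Rightarrow> real^4) \<Rightarrow> (real^4 \<Rightarrow> real^4 \<Rightarrow> real^4 \<Rightarrow> real)
    \<Rightarrow> real^4 \<Rightarrow> real^4 \<Rightarrow> real^4 \<Rightarrow> real" where
  "pullback \<phi> \<omega> p v w =
     \<omega> (\<phi> p) (frechet_derivative \<phi> (at p) v) (frechet_derivative \<phi> (at p) w)"

definition diffeo :: "(real^4 \<Rightarrow> real^4) \<Rightarrow> bool" where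
  "diffeo \<phi> \<longleftrightarrow> bij \<phi> \<and> smooth \<phi> \<and> smooth (inv \<phi>)"

definition Symp_std :: "(real^4 \<Rightarrow> real^4) set" where
  "Symp_std = {\<phi>. diffeo \<phi> \<and> pullback \<phi> omega_std = omega_std}"

end

theory Submission
  imports Defs
begin

text \<open>At a point x, write a, b for the values of f1, f2 at \<phi> x and c, d for those of g1, g2 at x,
  and let L be the derivative of \<phi> at x. The two pullback identities say that L preserves
  the constant standard form \<sigma> and that \<sigma>(S_{a,b} L v, L w) = \<sigma>(S_{c,d} v, w), where S_{p,q}
  scales the first coordinate plane by p and the second by q. Nondegeneracy of \<sigma> makes L
  invertible and gives S_{a,b} L = L S_{c,d}, so the two diagonal maps are conjugate and have
  the same eigenvalues: {a, b} = {c, d}.\<close>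

definition symp_form :: "real^4 \<Rightarrow> real^4 \<Rightarrow> real" where
  "symp_form v w = v$1 * w$2 - v$2 * w$1 + v$3 * w$4 - v$4 * w$3"

definition block_scale :: "real \<Rightarrow> real \<Rightarrow> real^4 \<Rightarrow> real^4" where
  "block_scale p q v = (\<chi> i. if i = 1 \<or> i = 2 then p * v$i else q * v$i)"

lemma block_scale_nth [simp]:
  "block_scale p q v $ 1 = p * v$1" "block_scale p q v $ 2 = p * v$2"
  "block_scale p q v $ 3 = q * v$3" "block_scale p q v $ 4 = q * v$4"
  by (simp_all add: block_scale_def)

lemma omega_std_eq_symp_form: "omega_std p v w = symp_form v w"
  by (simp add: omega_std_def split_form_def symp_form_def)

lemma split_form_eq_symp_form:
  "split_form f g p v w = symp_form (block_scale (f (p$1) (p$2)) (g (p$3) (p$4)) v) w"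
  by (simp add: split_form_def symp_form_def algebra_simps)

lemma symp_form_diff_left: "symp_form (v - v') w = symp_form v w - symp_form v' w"
  by (simp add: symp_form_def algebra_simps)

lemma symp_form_nondegenerate:
  assumes "\<And>w. symp_form v w = 0"
  shows "v = 0"
proof -
  have "symp_form v (axis 2 1) = 0" "symp_form v (axis 1 1) = 0"
    "symp_form v (axis 4 1) = 0" "symp_form v (axis 3 1) = 0"
    using assms by auto
  then have "v$1 = 0" "v$2 = 0" "v$3 = 0" "v$4 = 0"
    by (simp_all add: symp_form_def axis_def)
  then show ?thesis
    by (simp add: vec_eq_iff forall_4)
qed

lemma symp_form_preserving_linear_bij:
  fixes L :: "real^4 \<Rightarrow> real^4"
  assumes "linear L" and "\<And>v w. symp_form (L v) (L w) = symp_form v w"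
  shows "bij L"
proof -
  have "v = 0" if "L v = 0" for v
    using symp_form_nondegenerate[of v] assms(2)[of v] that linear_0[OF assms(1)]
    by (simp add: symp_form_def)
  then have "inj L"
    using assms(1) linear_inj_iff_eq_0 by blast
  then show ?thesis
    using assms(1) linear_injective_imp_surjective by (auto simp: bij_def)
qed

lemma block_scale_eigenvalue_iff:
  "(\<exists>v. v \<noteq> 0 \<and> block_scale p q v = r *\<^sub>R v) \<longleftrightarrow> r \<in> {p, q}"
proof
  assume "\<exists>v. v \<noteq> 0 \<and> block_scale p q v = r *\<^sub>R v"
  then obtain v i where "v$i \<noteq> 0" and "block_scale p q v = r *\<^sub>R v"
    by (auto simp: vec_eq_iff)
  moreover have "i = 1 \<or> i = 2 \<or> i = 3 \<or> i = 4"
    using exhaust_4 by blast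
  ultimately show "r \<in> {p, q}"
    unfolding vec_eq_iff by (auto dest!: spec[of _ i])
next
  assume "r \<in> {p, q}"
  then show "\<exists>v. v \<noteq> 0 \<and> block_scale p q v = r *\<^sub>R v"
  proof
    assume "r = p"
    then show ?thesis
      by (intro exI[of _ "axis 1 1"]) (simp add: axis_eq_0_iff vec_eq_iff forall_4 axis_def)
  next
    assume "r \<in> {q}"
    then show ?thesis
      by (intro exI[of _ "axis 3 1"]) (simp add: axis_eq_0_iff vec_eq_iff forall_4 axis_def)
  qed
qed

lemma conjugate_maps_same_eigenvalues:
  fixes L :: "'a::real_vector \<Rightarrow> 'b::real_vector" and S :: "'a \<Rightarrow> 'a" and T :: "'b \<Rightarrow> 'b"
  assumes "linear L" "bij L" and conj: "\<And>v. T (L v) = L (S v)"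
  shows "(\<exists>v. v \<noteq> 0 \<and> S v = r *\<^sub>R v) \<longleftrightarrow> (\<exists>w. w \<noteq> 0 \<and> T w = r *\<^sub>R w)"
proof -
  have inj: "inj L" and surj: "surj L"
    using assms(2) by (auto simp: bij_def)
  have nonzero: "L v \<noteq> 0 \<longleftrightarrow> v \<noteq> 0" for v
    using inj assms(1) linear_0 by (metis injD)
  have "S v = r *\<^sub>R v \<longleftrightarrow> T (L v) = r *\<^sub>R L v" for v
    using inj by (simp add: conj linear_scale[OF assms(1)] inj_eq flip: linear_scale[OF assms(1)])
  then show ?thesis
    using surj nonzero by (metis surjD)
qed

lemma symp_form_intertwining:
  fixes L :: "real^4 \<Rightarrow> real^4"
  assumes "surj L"
    and preserve: "\<And>v w. symp_form (L v) (L w) = symp_form v w"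
    and scaled: "\<And>v w. symp_form (block_scale a b (L v)) (L w) = symp_form (block_scale c d v) w"
  shows "block_scale a b (L v) = L (block_scale c d v)"
proof -
  have "symp_form (block_scale a b (L v) - L (block_scale c d v)) w = 0" for w
  proof -
    obtain w' where "w = L w'"
      using \<open>surj L\<close> by (metis surjD)
    then show ?thesis
      by (simp add: symp_form_diff_left scaled preserve)
  qed
  then have "block_scale a b (L v) - L (block_scale c d v) = 0"
    by (rule symp_form_nondegenerate)
  then show ?thesis
    by simp
qed

lemma symplectic_block_scales_eq:
  fixes L :: "real^4 \<Rightarrow> real^4"
  assumes "linear L"
    and "\<And>v w. symp_form (L v) (L w) = symp_form v w"
    and "\<And>v w. symp_form (block_scale a b (L v)) (L w) = symp_form (block_scale c d v) w"
  shows "{a, b} = {c, d}"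
proof -
  have "bij L"
    using assms(1,2) by (rule symp_form_preserving_linear_bij)
  then have "block_scale a b (L v) = L (block_scale c d v)" for v
    using assms(2,3) by (intro symp_form_intertwining) (auto simp: bij_def)
  then have "r \<in> {c, d} \<longleftrightarrow> r \<in> {a, b}" for r
    using conjugate_maps_same_eigenvalues[OF assms(1) \<open>bij L\<close>] block_scale_eigenvalue_iff
    by metis
  then show ?thesis
    by blast
qed

lemma smooth_linear_frechet_derivative:
  fixes f :: "'a::euclidean_space \<Rightarrow> 'b::euclidean_space"
  assumes "smooth f"
  shows "linear (frechet_derivative f (at x))"
proof -
  have "Ck (Suc 0) f"
    using assms by (simp add: smooth_def)
  then obtain f' where "(f has_derivative f' x) (at x)"
    by auto
  then show ?thesis
    using frechet_derivative_at has_derivative_linear by metis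
qed

theorem lemma6p1:
  fixes f1 f2 g1 g2 :: "real \<Rightarrow> real \<Rightarrow> real" and \<phi> :: "real^4 \<Rightarrow> real^4"
  assumes "smooth2 f1" "smooth2 f2" "smooth2 g1" "smooth2 g2"
    and "\<And>a b. f1 a b \<noteq> 0" "\<And>a b. f2 a b \<noteq> 0" "\<And>a b. g1 a b \<noteq> 0" "\<And>a b. g2 a b \<noteq> 0"
    and "\<phi> \<in> Symp_std"
    and "pullback \<phi> (split_form f1 f2) = split_form g1 g2"
  shows "\<forall>x::real^4.
     (f1 (\<phi> x $ 1) (\<phi> x $ 2) = g1 (x$1) (x$2) \<and> f2 (\<phi> x $ 3) (\<phi> x $ 4) = g2 (x$3) (x$4)) \<or>
     (f1 (\<phi> x $ 1) (\<phi> x $ 2) = g2 (x$3) (x$4) \<and> f2 (\<phi> x $ 3) (\<phi> x $ 4) = g1 (x$1) (x$2))"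
proof
  fix x :: "real^4"
  define L where "L = frechet_derivative \<phi> (at x)"
  have "smooth \<phi>" and symp: "pullback \<phi> omega_std = omega_std"
    using assms(9) by (auto simp: Symp_std_def diffeo_def)
  have "linear L"
    unfolding L_def using \<open>smooth \<phi>\<close> by (rule smooth_linear_frechet_derivative)
  moreover have "symp_form (L v) (L w) = symp_form v w" for v w
    using fun_cong[OF fun_cong[OF fun_cong[OF symp, of x], of v], of w]
    by (simp add: pullback_def L_def omega_std_eq_symp_form)
  moreover have "symp_form (block_scale (f1 (\<phi> x $ 1) (\<phi> x $ 2)) (f2 (\<phi> x $ 3) (\<phi> x $ 4)) (L v)) (L w)
      = symp_form (block_scale (g1 (x$1) (x$2)) (g2 (x$3) (x$4)) v) w" for v w
    using fun_cong[OF fun_cong[OF fun_cong[OF assms(10), of x], of v], of w]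
    by (simp add: pullback_def L_def split_form_eq_symp_form)
  ultimately show "(f1 (\<phi> x $ 1) (\<phi> x $ 2) = g1 (x$1) (x$2) \<and> f2 (\<phi> x $ 3) (\<phi> x $ 4) = g2 (x$3) (x$4)) \<or>
     (f1 (\<phi> x $ 1) (\<phi> x $ 2) = g2 (x$3) (x$4) \<and> f2 (\<phi> x $ 3) (\<phi> x $ 4) = g1 (x$1) (x$2))"
    by (simp flip: doubleton_eq_iff add: symplectic_block_scales_eq)
qed

end
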